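(* Let $G$ be a group, $A$ an additive abelian group with a right $G$-action by group automorphisms, and $n\in\mathbb Z_+$. For every $a\in\mathcal P_n(G,A)$, all values $[D^na](g_1,\dots,g_n)$ are $G$-invariant, i.e. $D^n(\mathcal P_n(G,A))\subseteq\mathcal C^n(G,A^G)$. Consequently the restriction $D^n|_{\mathcal P_n}:\mathcal P_n(G,A)\to\mathcal C^n(G,A^G)$ has kernel $\mathcal P_{n-1}(G,A)$ (for $n\ge1$), giving an exact sequence $0\to\mathcal P_{n-1}(G,A)\to\mathcal P_n(G,A)\to\mathcal C^n(G,A^G)$ and an injective homomorphism $\mathcal P_n(G,A)/\mathcal P_{n-1}(G,A)\hookrightarrow\mathcal C^n(G,A^G)$.
   Context: Right action: $a\mapsto a^g$, $a^{\mathbf e}=a$, $(a^g)^h=a^{gh}$, additive in $a$; $\mathbf e$ the identity. $A^G=\{a:a^g=a\ \forall g\}$. $\mathcal C^0(G,M)=M$ and for $n\ge1$, $\mathcal C^n(G,M)$ is the group of functions $G^n\to M$ vanishing whenever some argument is $\mathbf e$ (for $M=A$ or $M=A^G$). For $n\ge1$, $(d_nc)(g_1,\dots,g_n)=[c(g_1,\dots,g_{n-1})]^{g_n}-c(g_1,\dots,g_{n-1})$; $D^0=\mathrm{id}_A$, $D^n=d_nD^{n-1}$; $\mathcal P_n(G,A)=\ker D^{n+1}$. *)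

theory Defs
  imports "HOL-Algebra.Group"
begin

definition right_action :: "('g, 'm) monoid_scheme \<Rightarrow> ('a::ab_group_add \<Rightarrow> 'g \<Rightarrow> 'a) \<Rightarrow> bool" where
  "right_action G act \<longleftrightarrow>
     (\<forall>a. act a \<one>\<^bsub>G\<^esub> = a) \<and>
     (\<forall>a. \<forall>g\<in>carrier G. \<forall>h\<in>carrier G. act (act a g) h = act a (g \<otimes>\<^bsub>G\<^esub> h)) \<and>
     (\<forall>a b. \<forall>g\<in>carrier G. act (a + b) g = act a g + act b g)"

definition invariants :: "('g, 'm) monoid_scheme \<Rightarrow> ('a \<Rightarrow> 'g \<Rightarrow> 'a) \<Rightarrow> 'a set" where
  "invariants G act = {a. \<forall>g\<in>carrier G. act a g = a}"

definition tuples :: "('g, 'm) monoid_scheme \<Rightarrow> nat \<Rightarrow> 'g list set" where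
  "tuples G n = {gs. length gs = n \<and> set gs \<subseteq> carrier G}"

text \<open>Cochains C^n(G,M): functions on G^n with values in M, vanishing whenever some argument is
  the identity. For n = 0 such a function is just its value at the empty tuple, i.e. an element of M.\<close>
definition cochains :: "('g, 'm) monoid_scheme \<Rightarrow> nat \<Rightarrow> ('a::zero) set \<Rightarrow> ('g list \<Rightarrow> 'a) set" where
  "cochains G n M = {c. \<forall>gs\<in>tuples G n. c gs \<in> M \<and> (\<one>\<^bsub>G\<^esub> \<in> set gs \<longrightarrow> c gs = 0)}"

fun Dn :: "('a::ab_group_add \<Rightarrow> 'g \<Rightarrow> 'a) \<Rightarrow> nat \<Rightarrow> 'a \<Rightarrow> 'g list \<Rightarrow> 'a" where
  "Dn act 0 a = (\<lambda>gs. if gs = [] then a else 0)"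
| "Dn act (Suc n) a = (\<lambda>gs. if length gs = Suc n
      then act (Dn act n a (butlast gs)) (last gs) - Dn act n a (butlast gs) else 0)"

definition Pn :: "('g, 'm) monoid_scheme \<Rightarrow> ('a::ab_group_add \<Rightarrow> 'g \<Rightarrow> 'a) \<Rightarrow> nat \<Rightarrow> 'a set" where
  "Pn G act n = {a. \<forall>gs\<in>tuples G (Suc n). Dn act (Suc n) a gs = 0}"

end

theory Submission
  imports Defs
begin

text \<open>Since D^(n+1) a (g_1..g_n, g) = (D^n a (g_1..g_n))^g - D^n a (g_1..g_n), membership
  a \<in> P_n says precisely that all values of D^n a are G-invariant. As the action is by
  automorphisms, each D^n is additive; P_(n-1) = ker D^n is then the kernel of D^n on P_n, and
  D^n a = D^n b iff a - b \<in> P_(n-1).\<close>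

lemma right_action_one: "right_action G act \<Longrightarrow> act a \<one>\<^bsub>G\<^esub> = a"
  unfolding right_action_def by blast

lemma right_action_add:
  "right_action G act \<Longrightarrow> g \<in> carrier G \<Longrightarrow> act (a + b) g = act a g + act b g"
  unfolding right_action_def by blast

lemma right_action_zero: "right_action G act \<Longrightarrow> g \<in> carrier G \<Longrightarrow> act 0 g = 0"
  using right_action_add[of G act g 0 0] by simp

lemma zero_mem_invariants: "right_action G act \<Longrightarrow> 0 \<in> invariants G act"
  by (simp add: invariants_def right_action_zero)

lemma tuples_Suc:
  "gs \<in> tuples G (Suc n) \<longleftrightarrow>
     (\<exists>hs g. gs = hs @ [g] \<and> hs \<in> tuples G n \<and> g \<in> carrier G)"
proof
  assume gs: "gs \<in> tuples G (Suc n)"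
  then have "gs \<noteq> []" by (auto simp: tuples_def)
  then have "gs = butlast gs @ [last gs]" "last gs \<in> set gs" by simp_all
  moreover have "butlast gs \<in> tuples G n"
    using gs by (auto simp: tuples_def dest: in_set_butlastD)
  ultimately show "\<exists>hs g. gs = hs @ [g] \<and> hs \<in> tuples G n \<and> g \<in> carrier G"
    using gs unfolding tuples_def by blast
qed (auto simp: tuples_def)

lemma ball_tuples_Suc:
  "(\<forall>gs\<in>tuples G (Suc n). P gs) \<longleftrightarrow> (\<forall>hs\<in>tuples G n. \<forall>g\<in>carrier G. P (hs @ [g]))"
  by (auto simp: tuples_Suc)

lemma Dn_Suc_snoc [simp]:
  "length hs = n \<Longrightarrow> Dn act (Suc n) a (hs @ [g]) = act (Dn act n a hs) g - Dn act n a hs"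
  by simp

declare Dn.simps(2) [simp del]

lemma Dn_add:
  assumes "right_action G act" and "gs \<in> tuples G n"
  shows "Dn act n (a + b) gs = Dn act n a gs + Dn act n b gs"
  using assms(2)
proof (induction n arbitrary: gs)
  case 0
  then show ?case by simp
next
  case (Suc n)
  then obtain hs g where "gs = hs @ [g]" "hs \<in> tuples G n" "g \<in> carrier G"
    by (auto simp: tuples_Suc)
  with Suc.IH show ?case
    by (simp add: tuples_def right_action_add[OF assms(1)] algebra_simps)
qed

lemma Dn_diff:
  assumes "right_action G act" and "gs \<in> tuples G n"
  shows "Dn act n (a - b) gs = Dn act n a gs - Dn act n b gs"
  using Dn_add[OF assms, of "a - b" b] by (simp add: algebra_simps)

lemma Dn_eq_0_if_one_mem:
  assumes "right_action G act" and "gs \<in> tuples G n" and "\<one>\<^bsub>G\<^esub> \<in> set gs"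
  shows "Dn act n a gs = 0"
  using assms(2,3)
proof (induction n arbitrary: gs)
  case 0
  then show ?case by (simp add: tuples_def)
next
  case (Suc n)
  then obtain hs g where gs: "gs = hs @ [g]" "hs \<in> tuples G n" "g \<in> carrier G"
    by (auto simp: tuples_Suc)
  then have len: "length hs = n" by (simp add: tuples_def)
  show ?case
  proof (cases "g = \<one>\<^bsub>G\<^esub>")
    case True
    then show ?thesis by (simp add: gs(1) len right_action_one[OF assms(1)])
  next
    case False
    with Suc.prems gs have "Dn act n a hs = 0" by (auto intro: Suc.IH)
    then show ?thesis by (simp add: gs(1) len right_action_zero[OF assms(1) gs(3)])
  qed
qed

lemma mem_Pn_iff_Dn_invariant:
  "a \<in> Pn G act n \<longleftrightarrow> (\<forall>hs\<in>tuples G n. Dn act n a hs \<in> invariants G act)"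
proof -
  have "Dn act (Suc n) a (hs @ [g]) = 0 \<longleftrightarrow> act (Dn act n a hs) g = Dn act n a hs"
    if "hs \<in> tuples G n" for hs g
    using that by (simp add: tuples_def)
  then show ?thesis
    unfolding Pn_def ball_tuples_Suc invariants_def by auto
qed

lemma Dn_Pn_mem_cochains:
  assumes "right_action G act" and "a \<in> Pn G act n"
  shows "Dn act n a \<in> cochains G n (invariants G act)"
  using assms by (auto simp: cochains_def mem_Pn_iff_Dn_invariant Dn_eq_0_if_one_mem)

lemma Pn_subset_Pn_Suc:
  assumes "right_action G act"
  shows "Pn G act n \<subseteq> Pn G act (Suc n)"
proof
  fix a
  assume "a \<in> Pn G act n"
  then have "\<forall>gs\<in>tuples G (Suc n). Dn act (Suc n) a gs = 0"
    by (simp add: Pn_def)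
  then show "a \<in> Pn G act (Suc n)"
    using zero_mem_invariants[OF assms] by (simp add: mem_Pn_iff_Dn_invariant)
qed

lemma Dn_eq_iff_diff_mem_Pn:
  assumes "right_action G act"
  shows "(\<forall>gs\<in>tuples G (Suc n). Dn act (Suc n) a gs = Dn act (Suc n) b gs)
           \<longleftrightarrow> a - b \<in> Pn G act n"
  using Dn_diff[OF assms, of _ "Suc n" a b] by (auto simp: Pn_def)

theorem lemma1p17:
  fixes G :: "('g, 'm) monoid_scheme" (structure)
    and act :: "'a::ab_group_add \<Rightarrow> 'g \<Rightarrow> 'a"
    and n :: nat
  assumes "group G"
    and "right_action G act"
  shows "(\<forall>a\<in>Pn G act n. Dn act n a \<in> cochains G n (invariants G act))
    \<and> (n \<ge> 1 \<longrightarrow>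
         Pn G act (n - 1) \<subseteq> Pn G act n
       \<and> (\<forall>a\<in>Pn G act n. \<forall>b\<in>Pn G act n. \<forall>gs\<in>tuples G n.
             Dn act n (a + b) gs = Dn act n a gs + Dn act n b gs)
       \<and> {a\<in>Pn G act n. \<forall>gs\<in>tuples G n. Dn act n a gs = 0} = Pn G act (n - 1)
       \<and> (\<forall>a\<in>Pn G act n. \<forall>b\<in>Pn G act n.
             (\<forall>gs\<in>tuples G n. Dn act n a gs = Dn act n b gs) \<longleftrightarrow> a - b \<in> Pn G act (n - 1)))"
proof (intro conjI impI)
  show "\<forall>a\<in>Pn G act n. Dn act n a \<in> cochains G n (invariants G act)"
    using Dn_Pn_mem_cochains[OF assms(2)] by blast
next
  assume "n \<ge> 1"
  then obtain m where n: "n = Suc m" by (cases n) auto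
  have sub: "Pn G act (n - 1) \<subseteq> Pn G act n"
    using Pn_subset_Pn_Suc[OF assms(2)] by (simp add: n)
  then show "Pn G act (n - 1) \<subseteq> Pn G act n" .
  show "\<forall>a\<in>Pn G act n. \<forall>b\<in>Pn G act n. \<forall>gs\<in>tuples G n.
          Dn act n (a + b) gs = Dn act n a gs + Dn act n b gs"
    using Dn_add[OF assms(2)] by blast
  show "{a\<in>Pn G act n. \<forall>gs\<in>tuples G n. Dn act n a gs = 0} = Pn G act (n - 1)"
    using sub by (auto simp: n Pn_def)
  show "\<forall>a\<in>Pn G act n. \<forall>b\<in>Pn G act n.
          (\<forall>gs\<in>tuples G n. Dn act n a gs = Dn act n b gs) \<longleftrightarrow> a - b \<in> Pn G act (n - 1)"
    using Dn_eq_iff_diff_mem_Pn[OF assms(2)] by (simp add: n)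
qed

end
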